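(* Let $\mathbb{G}$ be a finite graph and let $\mathbb{H}$ be a graph that contains a copy of $\mathbb{K}_3$ (i.e., three distinct vertices pairwise joined by edges) and such that $\mathrm{Pol}(\mathbb{H})$ satisfies $\Sigma_{\mathbb{G}}$. Then there is a graph homomorphism from $\mathbb{G}$ to $\mathbb{H}$.
   Context: A graph is a structure $(V,E)$ with a single symmetric binary relation $E$ (loops allowed); $\mathbb{K}_3$ is the complete loopless graph on three vertices. For a graph $\mathbb{H}$, a polymorphism is a homomorphism from the power $\mathbb{H}^n$ (vertex set $H^n$, with $(\bar a,\bar b)$ an edge iff $(a_i,b_i)$ is an edge for all $i$) to $\mathbb{H}$; $\mathrm{Pol}(\mathbb{H})$ is the set of all polymorphisms. A set of functions satisfies a height 1 condition (a finite set of identities $f(x_{\pi(1)},\dots,x_{\pi(n)})\approx g(x_{\rho(1)},\dots,x_{\rho(m)})$, universally quantified) if its symbols can be assigned functions of the set of the right arities making all identities true. For a finite graph $\mathbb{G}=(V,E)$, $\Sigma_{\mathbb{G}}$ is the height 1 condition with a ternary symbol $f_v$ for each $v\in V$, a $6$-ary symbol $g_{(u,v)}$ for each $(u,v)\in E$, and, for each $(u,v)\in E$, the identities $f_u(x,y,z)\approx g_{(u,v)}(x,y,x,z,y,z)$ and $f_v(x,y,z)\approx g_{(u,v)}(y,x,z,x,z,y)$. *)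

theory Defs
  imports Main
begin

definition is_graph :: "'a set \<Rightarrow> ('a \<Rightarrow> 'a \<Rightarrow> bool) \<Rightarrow> bool" where
  "is_graph V E \<longleftrightarrow> (\<forall>u v. E u v \<longrightarrow> u \<in> V \<and> v \<in> V) \<and> (\<forall>u v. E u v \<longrightarrow> E v u)"

definition graph_hom :: "'a set \<Rightarrow> ('a \<Rightarrow> 'a \<Rightarrow> bool) \<Rightarrow> 'b set \<Rightarrow> ('b \<Rightarrow> 'b \<Rightarrow> bool) \<Rightarrow> ('a \<Rightarrow> 'b) \<Rightarrow> bool" where
  "graph_hom V E W F h \<longleftrightarrow> (\<forall>v\<in>V. h v \<in> W) \<and> (\<forall>u v. E u v \<longrightarrow> F (h u) (h v))"

definition contains_K3 :: "'b set \<Rightarrow> ('b \<Rightarrow> 'b \<Rightarrow> bool) \<Rightarrow> bool" where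
  "contains_K3 W F \<longleftrightarrow> (\<exists>a\<in>W. \<exists>b\<in>W. \<exists>c\<in>W. a \<noteq> b \<and> b \<noteq> c \<and> a \<noteq> c \<and> F a b \<and> F b c \<and> F a c)"

text \<open>Ternary polymorphism: homomorphism H^3 \<rightarrow> H (only its values on the carrier matter).\<close>
definition pol3 :: "'b set \<Rightarrow> ('b \<Rightarrow> 'b \<Rightarrow> bool) \<Rightarrow> ('b \<Rightarrow> 'b \<Rightarrow> 'b \<Rightarrow> 'b) \<Rightarrow> bool" where
  "pol3 W F f \<longleftrightarrow> (\<forall>x1\<in>W. \<forall>x2\<in>W. \<forall>x3\<in>W. f x1 x2 x3 \<in> W) \<and>
     (\<forall>x1 x2 x3 y1 y2 y3. F x1 y1 \<and> F x2 y2 \<and> F x3 y3 \<longrightarrow> F (f x1 x2 x3) (f y1 y2 y3))"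

definition pol6 :: "'b set \<Rightarrow> ('b \<Rightarrow> 'b \<Rightarrow> bool) \<Rightarrow> ('b \<Rightarrow> 'b \<Rightarrow> 'b \<Rightarrow> 'b \<Rightarrow> 'b \<Rightarrow> 'b \<Rightarrow> 'b) \<Rightarrow> bool" where
  "pol6 W F g \<longleftrightarrow> (\<forall>x1\<in>W. \<forall>x2\<in>W. \<forall>x3\<in>W. \<forall>x4\<in>W. \<forall>x5\<in>W. \<forall>x6\<in>W. g x1 x2 x3 x4 x5 x6 \<in> W) \<and>
     (\<forall>x1 x2 x3 x4 x5 x6 y1 y2 y3 y4 y5 y6.
        F x1 y1 \<and> F x2 y2 \<and> F x3 y3 \<and> F x4 y4 \<and> F x5 y5 \<and> F x6 y6 \<longrightarrow>
        F (g x1 x2 x3 x4 x5 x6) (g y1 y2 y3 y4 y5 y6))"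

definition Pol_satisfies_Sigma ::
  "'a set \<Rightarrow> ('a \<Rightarrow> 'a \<Rightarrow> bool) \<Rightarrow> 'b set \<Rightarrow> ('b \<Rightarrow> 'b \<Rightarrow> bool) \<Rightarrow> bool" where
  "Pol_satisfies_Sigma V E W F \<longleftrightarrow>
    (\<exists>(f :: 'a \<Rightarrow> 'b \<Rightarrow> 'b \<Rightarrow> 'b \<Rightarrow> 'b)
      (g :: 'a \<Rightarrow> 'a \<Rightarrow> 'b \<Rightarrow> 'b \<Rightarrow> 'b \<Rightarrow> 'b \<Rightarrow> 'b \<Rightarrow> 'b \<Rightarrow> 'b).
       (\<forall>v\<in>V. pol3 W F (f v)) \<and>
       (\<forall>u v. E u v \<longrightarrow> pol6 W F (g u v) \<and>
          (\<forall>x\<in>W. \<forall>y\<in>W. \<forall>z\<in>W.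
              f u x y z = g u v x y x z y z \<and> f v x y z = g u v y x z x z y)))"

end

theory Submission
  imports Defs
begin

text \<open>Fix a triangle \<open>a, b, c\<close> in \<open>\<HH>\<close> and send each vertex \<open>v\<close> to \<open>f\<^sub>v(a, b, c)\<close>.
  For an edge \<open>(u, v)\<close> the identities of \<open>\<Sigma>\<^sub>\<GG>\<close> rewrite the images of \<open>u\<close> and \<open>v\<close> as
  \<open>g\<^sub>u\<^sub>v(a, b, a, c, b, c)\<close> and \<open>g\<^sub>u\<^sub>v(b, a, c, a, c, b)\<close>; these argument tuples are
  coordinatewise adjacent, so the polymorphism \<open>g\<^sub>u\<^sub>v\<close> maps them to adjacent vertices.\<close>

lemma pol6_triangle_edge:
  assumes "pol6 W F g" and sym: "\<And>x y. F x y \<Longrightarrow> F y x"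
    and "F a b" "F b c" "F a c"
  shows "F (g a b a c b c) (g b a c a c b)"
  using assms unfolding pol6_def by blast

lemma graph_hom_Sigma_triangle:
  assumes sym: "\<And>x y. F x y \<Longrightarrow> F y x"
    and triangle: "a \<in> W" "b \<in> W" "c \<in> W" "F a b" "F b c" "F a c"
    and pol_f: "\<forall>v\<in>V. pol3 W F (f v)"
    and Sigma: "\<forall>u v. E u v \<longrightarrow> pol6 W F (g u v) \<and>
          (\<forall>x\<in>W. \<forall>y\<in>W. \<forall>z\<in>W.
              f u x y z = g u v x y x z y z \<and> f v x y z = g u v y x z x z y)"
  shows "graph_hom V E W F (\<lambda>v. f v a b c)"
  unfolding graph_hom_def
proof (intro conjI allI impI ballI)
  fix v assume "v \<in> V"
  then show "f v a b c \<in> W" using pol_f triangle unfolding pol3_def by blast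
next
  fix u v assume "E u v"
  then have "pol6 W F (g u v)"
    and "f u a b c = g u v a b a c b c" "f v a b c = g u v b a c a c b"
    using Sigma triangle by blast+
  then show "F (f u a b c) (f v a b c)"
    using pol6_triangle_edge sym triangle by metis
qed

theorem lemma3p2:
  fixes V :: "'a set" and E :: "'a \<Rightarrow> 'a \<Rightarrow> bool"
    and W :: "'b set" and F :: "'b \<Rightarrow> 'b \<Rightarrow> bool"
  assumes "is_graph V E" and "finite V"
    and "is_graph W F" and "contains_K3 W F"
    and "Pol_satisfies_Sigma V E W F"
  shows "\<exists>h. graph_hom V E W F h"
proof -
  have sym: "\<And>x y. F x y \<Longrightarrow> F y x"
    using assms(3) unfolding is_graph_def by blast
  obtain a b c where triangle: "a \<in> W" "b \<in> W" "c \<in> W" "F a b" "F b c" "F a c"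
    using assms(4) unfolding contains_K3_def by blast
  obtain f g where Sigma: "\<forall>v\<in>V. pol3 W F (f v)"
    "\<forall>u v. E u v \<longrightarrow> pol6 W F (g u v) \<and>
          (\<forall>x\<in>W. \<forall>y\<in>W. \<forall>z\<in>W.
              f u x y z = g u v x y x z y z \<and> f v x y z = g u v y x z x z y)"
    using assms(5) unfolding Pol_satisfies_Sigma_def by blast
  have "graph_hom V E W F (\<lambda>v. f v a b c)"
    using graph_hom_Sigma_triangle[OF sym triangle Sigma] .
  then show ?thesis by blast
qed

end
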